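(* There exists a locally finite group $K$ with a proper left invariant metric $d_K$ such that $\operatorname{asdim}_{AN}(K,d_K)=\infty$ and all asymptotic cones of $(K,d_K)$ are ultrametric.
   Context: A group is locally finite if each of its finitely generated subgroups is finite. A metric $d_G$ on a group $G$ is proper left invariant if $d_G(gh,gk)=d_G(h,k)$ for all $g,h,k\in G$ and for every $R>0$ only finitely many $g$ satisfy $d_G(1,g)\le R$. $\operatorname{asdim}_{AN}(X)$ is the least $n$ such that for some constants $C>0,k$ and every $s>0$ there is a cover $\{\mathcal U_0,\dots,\mathcal U_n\}$ of $X$ whose members have $s$-scale connected components (classes of "joined by a chain inside the set with consecutive distances $<s$") of diameter $\le Cs+k$; $\infty$ if no such $n$. Asymptotic cone $\operatorname{Cone}_\omega(X,c,d)$: for a non-principal ultrafilter $\omega$, sequence $c$ in $X$, positive reals $d_n$ with $\lim_\omega d_n=\infty$, the sequences $(x_n)$ with $\lim_\omega \rho(x_n,c_n)/d_n<\infty$, pseudometric $\lim_\omega\rho(x_n,y_n)/d_n$, modulo distance zero. Ultrametric: $\rho(x,y)\le\max\{\rho(x,z),\rho(y,z)\}$. *)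

theory Defs
  imports "HOL-Analysis.Analysis" "HOL-Algebra.Generated_Groups"
begin

definition locally_finite_group :: "('a, 'b) monoid_scheme \<Rightarrow> bool" where
  "locally_finite_group G \<longleftrightarrow> group G \<and>
     (\<forall>S. S \<subseteq> carrier G \<and> finite S \<longrightarrow> finite (generate G S))"

definition metric_on :: "'a set \<Rightarrow> ('a \<Rightarrow> 'a \<Rightarrow> real) \<Rightarrow> bool" where
  "metric_on X d \<longleftrightarrow>
     (\<forall>x\<in>X. \<forall>y\<in>X. 0 \<le> d x y \<and> (d x y = 0 \<longleftrightarrow> x = y) \<and> d x y = d y x) \<and>
     (\<forall>x\<in>X. \<forall>y\<in>X. \<forall>z\<in>X. d x z \<le> d x y + d y z)"

definition proper_left_invariant_metric :: "('a, 'b) monoid_scheme \<Rightarrow> ('a \<Rightarrow> 'a \<Rightarrow> real) \<Rightarrow> bool" where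
  "proper_left_invariant_metric G d \<longleftrightarrow> metric_on (carrier G) d \<and>
     (\<forall>g\<in>carrier G. \<forall>h\<in>carrier G. \<forall>k\<in>carrier G.
        d (g \<otimes>\<^bsub>G\<^esub> h) (g \<otimes>\<^bsub>G\<^esub> k) = d h k) \<and>
     (\<forall>R. finite {g \<in> carrier G. d \<one>\<^bsub>G\<^esub> g \<le> R})"

definition s_chain :: "('a \<Rightarrow> 'a \<Rightarrow> real) \<Rightarrow> real \<Rightarrow> 'a set \<Rightarrow> 'a \<Rightarrow> 'a \<Rightarrow> bool" where
  "s_chain d s U x y \<longleftrightarrow> (\<exists>xs. xs \<noteq> [] \<and> hd xs = x \<and> last xs = y \<and> set xs \<subseteq> U \<and>
     (\<forall>i. Suc i < length xs \<longrightarrow> d (xs ! i) (xs ! Suc i) < s))"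

definition asdim_AN_le :: "'a set \<Rightarrow> ('a \<Rightarrow> 'a \<Rightarrow> real) \<Rightarrow> nat \<Rightarrow> bool" where
  "asdim_AN_le X d n \<longleftrightarrow> (\<exists>C k. C > 0 \<and> (\<forall>s>0. \<exists>U :: nat \<Rightarrow> 'a set.
     (\<forall>i\<le>n. U i \<subseteq> X) \<and> (\<Union>i\<le>n. U i) = X \<and>
     (\<forall>i\<le>n. \<forall>x\<in>U i. \<forall>y\<in>U i. s_chain d s (U i) x y \<longrightarrow> d x y \<le> C * s + k)))"

definition asdim_AN_infinite :: "'a set \<Rightarrow> ('a \<Rightarrow> 'a \<Rightarrow> real) \<Rightarrow> bool" where
  "asdim_AN_infinite X d \<longleftrightarrow> \<not> (\<exists>n. asdim_AN_le X d n)"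

definition nonprincipal_ultrafilter :: "nat filter \<Rightarrow> bool" where
  "nonprincipal_ultrafilter F \<longleftrightarrow> F \<noteq> bot \<and>
     (\<forall>P. eventually P F \<or> eventually (\<lambda>n. \<not> P n) F) \<and>
     (\<forall>m. eventually (\<lambda>n. n \<noteq> m) F)"

text \<open>Sequences defining points of Cone_omega(X,c,r).\<close>
definition cone_seq :: "'a set \<Rightarrow> ('a \<Rightarrow> 'a \<Rightarrow> real) \<Rightarrow> nat filter \<Rightarrow> (nat \<Rightarrow> 'a) \<Rightarrow> (nat \<Rightarrow> real) \<Rightarrow> (nat \<Rightarrow> 'a) \<Rightarrow> bool" where
  "cone_seq X d F c r x \<longleftrightarrow> (\<forall>n. x n \<in> X) \<and>
     (\<exists>M. eventually (\<lambda>n. d (x n) (c n) / r n \<le> M) F)"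

definition cone_dist :: "('a \<Rightarrow> 'a \<Rightarrow> real) \<Rightarrow> nat filter \<Rightarrow> (nat \<Rightarrow> real) \<Rightarrow> (nat \<Rightarrow> 'a) \<Rightarrow> (nat \<Rightarrow> 'a) \<Rightarrow> real" where
  "cone_dist d F r x y = Lim F (\<lambda>n. d (x n) (y n) / r n)"

text \<open>The cone is ultrametric (checked on the pseudometric, equivalently on the quotient).\<close>
definition cone_ultrametric :: "'a set \<Rightarrow> ('a \<Rightarrow> 'a \<Rightarrow> real) \<Rightarrow> nat filter \<Rightarrow> (nat \<Rightarrow> 'a) \<Rightarrow> (nat \<Rightarrow> real) \<Rightarrow> bool" where
  "cone_ultrametric X d F c r \<longleftrightarrow>
     (\<forall>x y z. cone_seq X d F c r x \<and> cone_seq X d F c r y \<and> cone_seq X d F c r z \<longrightarrow>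
        cone_dist d F r x y \<le> max (cone_dist d F r x z) (cone_dist d F r y z))"

definition all_cones_ultrametric :: "'a set \<Rightarrow> ('a \<Rightarrow> 'a \<Rightarrow> real) \<Rightarrow> bool" where
  "all_cones_ultrametric X d \<longleftrightarrow>
     (\<forall>F c r. nonprincipal_ultrafilter F \<and> (\<forall>n. c n \<in> X) \<and> (\<forall>n. r n > 0) \<and>
        filterlim r at_top F \<longrightarrow> cone_ultrametric X d F c r)"

end

theory Submission
  imports Defs "HOL-Library.Nat_Bijection"
begin

text \<open>
  We realise the group as \<open>K = \<Oplus>\<^sub>\<nat> \<int>/2\<close>, i.e. the natural numbers under bitwise XOR
  (finite sets of bits under symmetric difference), which is locally finite.  The natural
  numbers are partitioned into blocks; block \<open>J\<close> is a \<open>(J + 1) \<times> N\<^sub>J\<close> array of cells with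
  \<open>N\<^sub>J \<approx> exp (2J\<^sup>2 + 4J + 1)\<close>.  The norm of a finite set charges every block \<open>J\<close> it meets in
  \<open>k\<close> cells by \<open>J + 1 + ln (1 + k)\<close>, and \<open>d(x, y)\<close> is the norm of \<open>x XOR y\<close>.

  The general estimate \<open>block_norm_union_bound\<close> makes \<open>d\<close> a
  proper left invariant metric which is ultrametric up to the additive constant \<open>ln 2\<close>; a
  general lemma shows that such a constant disappears in every asymptotic cone, so all cones
  are ultrametric.  For the dimension, a discrete Lebesgue covering lemma derived from Kuhn's
  combinatorial lemma forbids covers of grids by few sets with small \<open>s\<close>-components;
  the rows of block \<open>J\<close> carry a grid \<open>{0..N\<^sub>J}\<^sup>J\<^sup>+\<^sup>1\<close> whose neighbours are \<open>2J + 3\<close>-close while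
  opposite faces are \<open>ln N\<^sub>J\<close>-far, so no \<open>asdim\<^sub>A\<^sub>N\<close> bound holds.
\<close>

unbundle bit_operations_syntax

section \<open>The group: finite subsets of \<open>\<nat>\<close> under symmetric difference\<close>

text \<open>Natural numbers with bitwise XOR form the group \<open>\<Oplus>\<^sub>\<nat> \<int>/2\<close>; via
  \<open>set_decode\<close>, an element is the finite set of its one-bits (its support) and the
  product is symmetric difference of supports.\<close>

definition xor_group :: "nat monoid" where
  "xor_group = \<lparr>carrier = UNIV, mult = (XOR), one = 0\<rparr>"

lemma xor_group_simps [simp]:
  "carrier xor_group = UNIV" "one xor_group = 0" "mult xor_group x y = x XOR y"
  by (simp_all add: xor_group_def)

lemma set_decode_eq_bits: "set_decode x = {i. bit x i}"
  by (simp add: set_decode_def bit_iff_odd)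

lemma set_decode_xor: "set_decode (x XOR y) = sym_diff (set_decode x) (set_decode y)"
  by (auto simp: set_decode_eq_bits bit_xor_iff)

lemma set_decode_xor_subset: "set_decode (x XOR y) \<subseteq> set_decode x \<union> set_decode y"
  by (auto simp: set_decode_xor)

lemma set_decode_xor_empty_iff: "set_decode (x XOR y) = {} \<longleftrightarrow> x = y"
  by (auto simp: set_decode_xor) (metis set_decode_inverse)

lemma finite_bounded_support: "finite W \<Longrightarrow> finite {x. set_decode x \<subseteq> W}"
proof -
  assume "finite W"
  have "{x. set_decode x \<subseteq> W} \<subseteq> set_encode ` Pow W"
    by (metis (mono_tags, lifting) PowI image_eqI mem_Collect_eq set_decode_inverse subsetI)
  then show ?thesis using \<open>finite W\<close> by (simp add: finite_subset)
qed

lemma group_xor_group: "group xor_group"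
proof (rule groupI)
  show "\<exists>y\<in>carrier xor_group. y \<otimes>\<^bsub>xor_group\<^esub> x = \<one>\<^bsub>xor_group\<^esub>" for x
    by (intro bexI[of _ x]) simp_all
qed (simp_all add: xor.assoc)

lemma xor_group_inv [simp]: "inv\<^bsub>xor_group\<^esub> x = x"
  by (rule group.inv_equality[OF group_xor_group]) simp_all

text \<open>Every element of the subgroup generated by \<open>S\<close> has support inside the union of the
  supports of \<open>S\<close>, so finitely generated subgroups are finite.\<close>

lemma locally_finite_xor_group: "locally_finite_group xor_group"
  unfolding locally_finite_group_def
proof (intro conjI allI impI group_xor_group)
  fix S :: "nat set"
  assume "S \<subseteq> carrier xor_group \<and> finite S"
  then have "finite (\<Union> (set_decode ` S))" by simp
  moreover have "generate xor_group S \<subseteq> {x. set_decode x \<subseteq> \<Union> (set_decode ` S)}"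
  proof
    fix g assume "g \<in> generate xor_group S"
    then show "g \<in> {x. set_decode x \<subseteq> \<Union> (set_decode ` S)}"
      by (induction rule: generate.induct) (use set_decode_xor_subset in fastforce)+
  qed
  ultimately show "finite (generate xor_group S)"
    using finite_bounded_support finite_subset by blast
qed

section \<open>Block norms on finite sets\<close>

text \<open>Because \<open>ln\<close> is subadditive on \<open>1 + k\<close> and only costs \<open>ln 2\<close> when counts are
  added, the norm is subadditive and ultrametric up to the additive constant \<open>ln 2\<close>.\<close>

definition count_weight :: "nat \<Rightarrow> nat \<Rightarrow> real" where
  "count_weight J k = (if k = 0 then 0 else real J + 1 + ln (1 + real k))"

lemma count_weight_nonneg: "0 \<le> count_weight J k"
  by (simp add: count_weight_def)

lemma count_weight_mono: "k \<le> l \<Longrightarrow> count_weight J k \<le> count_weight J l"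
  by (simp add: count_weight_def)

lemma count_weight_add:
  assumes "k \<le> a + b"
  shows "count_weight J k \<le> count_weight J a + count_weight J b"
    and "count_weight J k \<le> max (count_weight J a) (count_weight J b) + ln 2"
proof -
  have ln2: "0 < ln (2::real)" by simp
  consider "k = 0" | "a = 0" | "b = 0" | "0 < k" "0 < a" "0 < b" by blast
  then have "count_weight J k \<le> count_weight J a + count_weight J b \<and>
             count_weight J k \<le> max (count_weight J a) (count_weight J b) + ln 2"
  proof cases
    case 1
    then show ?thesis using count_weight_nonneg[of J a] count_weight_nonneg[of J b] ln2
      by (simp add: count_weight_def add_nonneg_nonneg max.coboundedI1)
  next
    case 2
    then have "count_weight J k \<le> count_weight J b" using assms by (simp add: count_weight_mono)
    then show ?thesis
      using count_weight_nonneg[of J a] ln2 max.cobounded2[of "count_weight J a" "count_weight J b"]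
      by linarith
  next
    case 3
    then have "count_weight J k \<le> count_weight J a" using assms by (simp add: count_weight_mono)
    then show ?thesis
      using count_weight_nonneg[of J b] ln2 max.cobounded1[of "count_weight J a" "count_weight J b"]
      by linarith
  next
    case 4
    have k_le: "real k \<le> real a + real b" using assms by (metis of_nat_add of_nat_le_iff)
    then have "1 + real k \<le> (1 + real a) * (1 + real b)"
      using mult_nonneg_nonneg[of "real a" "real b"] by (simp add: algebra_simps del: mult_nonneg_nonneg)
    then have "ln (1 + real k) \<le> ln ((1 + real a) * (1 + real b))" by simp
    then have sum: "ln (1 + real k) \<le> ln (1 + real a) + ln (1 + real b)"
      by (simp add: ln_mult)
    have "1 + real k \<le> 2 * (1 + max (real a) (real b))" using k_le by (auto simp: max_def)
    then have "ln (1 + real k) \<le> ln (2 * (1 + max (real a) (real b)))" by simp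
    also have "\<dots> = ln 2 + max (ln (1 + real a)) (ln (1 + real b))"
      by (subst ln_mult) (auto simp: max_def)
    finally have max: "ln (1 + real k) \<le> ln 2 + max (ln (1 + real a)) (ln (1 + real b))" .
    show ?thesis using 4 sum max by (auto simp: count_weight_def max_def)
  qed
  then show "count_weight J k \<le> count_weight J a + count_weight J b"
    and "count_weight J k \<le> max (count_weight J a) (count_weight J b) + ln 2" by simp_all
qed

definition block_weight :: "('e \<Rightarrow> nat) \<Rightarrow> 'e set \<Rightarrow> nat \<Rightarrow> real" where
  "block_weight \<beta> A J = count_weight J (card {e \<in> A. \<beta> e = J})"

definition block_norm :: "('e \<Rightarrow> nat) \<Rightarrow> 'e set \<Rightarrow> real" where
  "block_norm \<beta> A = Max (insert 0 (block_weight \<beta> A ` \<beta> ` A))"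

lemma block_weight_outside: "(\<And>e. e \<in> A \<Longrightarrow> \<beta> e \<noteq> J) \<Longrightarrow> block_weight \<beta> A J = 0"
proof -
  assume "\<And>e. e \<in> A \<Longrightarrow> \<beta> e \<noteq> J"
  then have "{e \<in> A. \<beta> e = J} = {}" by auto
  then show ?thesis unfolding block_weight_def by (simp only: card.empty) (simp add: count_weight_def)
qed

lemma block_norm_nonneg: "finite A \<Longrightarrow> 0 \<le> block_norm \<beta> A"
  unfolding block_norm_def by (simp add: Max_ge)

lemma block_weight_le_norm:
  assumes "finite A" shows "block_weight \<beta> A J \<le> block_norm \<beta> A"
proof (cases "J \<in> \<beta> ` A")
  case True
  then show ?thesis using assms unfolding block_norm_def by (simp add: Max_ge)
next
  case False
  then have "block_weight \<beta> A J = 0" by (auto intro: block_weight_outside)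
  then show ?thesis using block_norm_nonneg[OF assms] by simp
qed

lemma block_norm_le:
  "finite A \<Longrightarrow> 0 \<le> R \<Longrightarrow> (\<And>J. block_weight \<beta> A J \<le> R) \<Longrightarrow> block_norm \<beta> A \<le> R"
  unfolding block_norm_def by (auto intro!: Max.boundedI)

text \<open>Any point of \<open>A\<close> in block \<open>J\<close> forces norm at least \<open>J + 1\<close>; this makes balls finite.\<close>

lemma block_norm_ge_member:
  assumes "finite A" "e \<in> A" shows "real (\<beta> e) + 1 \<le> block_norm \<beta> A"
proof -
  have "card {a \<in> A. \<beta> a = \<beta> e} \<noteq> 0" using assms by auto
  then have "real (\<beta> e) + 1 \<le> block_weight \<beta> A (\<beta> e)"
    by (simp add: block_weight_def count_weight_def)
  also have "\<dots> \<le> block_norm \<beta> A" using assms(1) by (rule block_weight_le_norm)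
  finally show ?thesis .
qed

lemma block_norm_eq_0_iff:
  assumes "finite A" shows "block_norm \<beta> A = 0 \<longleftrightarrow> A = {}"
proof
  assume "block_norm \<beta> A = 0"
  then show "A = {}" using block_norm_ge_member[OF assms, of _ \<beta>] by fastforce
qed (simp add: block_norm_def)

lemma block_norm_union_bound:
  assumes "finite B" "finite C" "A \<subseteq> B \<union> C"
  shows "block_norm \<beta> A \<le> block_norm \<beta> B + block_norm \<beta> C"
    and "block_norm \<beta> A \<le> max (block_norm \<beta> B) (block_norm \<beta> C) + ln 2"
proof -
  have finA: "finite A" using assms finite_subset by blast
  have count: "card {e \<in> A. \<beta> e = J} \<le> card {e \<in> B. \<beta> e = J} + card {e \<in> C. \<beta> e = J}" for J
  proof -
    have "card {e \<in> A. \<beta> e = J} \<le> card ({e \<in> B. \<beta> e = J} \<union> {e \<in> C. \<beta> e = J})"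
      using assms by (intro card_mono) auto
    also have "\<dots> \<le> card {e \<in> B. \<beta> e = J} + card {e \<in> C. \<beta> e = J}" by (rule card_Un_le)
    finally show ?thesis .
  qed
  note wB = block_weight_le_norm[OF assms(1)] and wC = block_weight_le_norm[OF assms(2)]
  show "block_norm \<beta> A \<le> block_norm \<beta> B + block_norm \<beta> C"
  proof (rule block_norm_le[OF finA])
    show "0 \<le> block_norm \<beta> B + block_norm \<beta> C"
      using assms by (simp add: block_norm_nonneg)
    show "block_weight \<beta> A J \<le> block_norm \<beta> B + block_norm \<beta> C" for J
      using count_weight_add(1)[OF count[of J], of J] wB[of \<beta> J] wC[of \<beta> J]
      unfolding block_weight_def by linarith
  qed
  show "block_norm \<beta> A \<le> max (block_norm \<beta> B) (block_norm \<beta> C) + ln 2"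
  proof (rule block_norm_le[OF finA])
    show "0 \<le> max (block_norm \<beta> B) (block_norm \<beta> C) + ln 2"
      using assms by (simp add: block_norm_nonneg max.coboundedI1)
    show "block_weight \<beta> A J \<le> max (block_norm \<beta> B) (block_norm \<beta> C) + ln 2" for J
      using count_weight_add(2)[OF count[of J], of J] max.mono[OF wB[of \<beta> J] wC[of \<beta> J]]
      unfolding block_weight_def by linarith
  qed
qed

section \<open>The block structure of \<open>\<nat>\<close> and the metric\<close>

text \<open>Block \<open>J\<close> is a \<open>(J + 1) \<times> block_size J\<close> array of cells, coded through the pairing
  bijection; every natural number that is not such a cell is put into the block indexed by itself.
  The huge block sizes make long rows expensive (logarithmically) while single cells stay
  cheap, which is what the grid argument below exploits.\<close>

definition block_size :: "nat \<Rightarrow> nat" where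
  "block_size J = nat \<lceil>exp (real (2*J*J + 4*J + 1))\<rceil>"

definition cell :: "nat \<Rightarrow> nat \<Rightarrow> nat \<Rightarrow> nat" where
  "cell J i t = prod_encode (J, prod_encode (i, t))"

definition block_of :: "nat \<Rightarrow> nat" where
  "block_of e = (case prod_decode e of (J, q) \<Rightarrow> (case prod_decode q of (i, t) \<Rightarrow>
      if i \<le> J \<and> t < block_size J then J else e))"

lemma block_size_pos: "0 < block_size J"
  unfolding block_size_def using exp_gt_zero[of "real (2*J*J + 4*J + 1)"] by linarith

lemma ln_block_size: "real (2*J*J + 4*J + 1) \<le> ln (1 + real (block_size J))"
proof -
  have "exp (real (2*J*J + 4*J + 1)) \<le> 1 + real (block_size J)"
    unfolding block_size_def using real_nat_ceiling_ge by (smt (verit))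
  then show ?thesis by (subst ln_ge_iff) auto
qed

lemma cell_inject: "cell J i t = cell J' i' t' \<longleftrightarrow> J = J' \<and> i = i' \<and> t = t'"
  unfolding cell_def by (metis prod_encode_inverse prod.inject)

lemma block_of_cell: "i \<le> J \<Longrightarrow> t < block_size J \<Longrightarrow> block_of (cell J i t) = J"
  by (simp add: block_of_def cell_def)

lemma finite_block_of_le: "finite {e. block_of e \<le> R}"
proof -
  have "{e. block_of e \<le> R} \<subseteq> {..R} \<union> (\<Union>J\<le>R. \<Union>i\<le>J. cell J i ` {..<block_size J})"
  proof
    fix e assume e: "e \<in> {e. block_of e \<le> R}"
    obtain J i t where e_eq: "e = cell J i t"
      by (metis cell_def prod_decode_inverse surj_pair)
    show "e \<in> {..R} \<union> (\<Union>J\<le>R. \<Union>i\<le>J. cell J i ` {..<block_size J})"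
    proof (cases "i \<le> J \<and> t < block_size J")
      case True
      then show ?thesis using e e_eq block_of_cell by fastforce
    next
      case False
      then have "block_of e = e" by (auto simp: e_eq block_of_def cell_def)
      then show ?thesis using e by auto
    qed
  qed
  then show ?thesis by (rule finite_subset) auto
qed

definition xor_dist :: "nat \<Rightarrow> nat \<Rightarrow> real" where
  "xor_dist x y = block_norm block_of (set_decode (x XOR y))"

text \<open>Since \<open>x XOR y = (x XOR z) XOR (z XOR y)\<close>, triangle-type inequalities for
  \<open>xor_dist\<close> reduce to \<open>block_norm_union_bound\<close>.\<close>

lemma xor_dist_split:
  "set_decode (x XOR y) \<subseteq> set_decode (x XOR z) \<union> set_decode (z XOR y)"
proof -
  have "x XOR y = (x XOR z) XOR (z XOR y)" by (metis xor.assoc xor.left_neutral xor_self_eq)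
  then show ?thesis by (metis set_decode_xor_subset)
qed

lemma xor_dist_triangle: "xor_dist x y \<le> xor_dist x z + xor_dist z y"
  unfolding xor_dist_def by (rule block_norm_union_bound(1)[OF _ _ xor_dist_split]) simp_all

lemma xor_dist_quasi_ultrametric: "xor_dist x y \<le> max (xor_dist x z) (xor_dist y z) + ln 2"
proof -
  have "set_decode (x XOR y) \<subseteq> set_decode (x XOR z) \<union> set_decode (y XOR z)"
    using xor_dist_split[of x y z] by (simp add: xor.commute)
  then show ?thesis unfolding xor_dist_def by (rule block_norm_union_bound(2)[rotated 2]) simp_all
qed

text \<open>\<open>xor_dist\<close> is a proper left invariant metric: it vanishes only on the diagonal, the
  factor \<open>g\<close> cancels in \<open>(g XOR h) XOR (g XOR k)\<close>, and a ball of radius \<open>R\<close> consists of elements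
  supported in blocks of index at most \<open>R\<close>.\<close>

lemma proper_left_invariant_xor_dist: "proper_left_invariant_metric xor_group xor_dist"
  unfolding proper_left_invariant_metric_def metric_on_def
proof (intro conjI ballI allI)
  fix x y z :: nat
  show "0 \<le> xor_dist x y" by (simp add: xor_dist_def block_norm_nonneg)
  show "xor_dist x y = 0 \<longleftrightarrow> x = y"
    by (simp add: xor_dist_def block_norm_eq_0_iff set_decode_xor_empty_iff)
  show "xor_dist x y = xor_dist y x" by (simp add: xor_dist_def xor.commute)
  show "xor_dist x z \<le> xor_dist x y + xor_dist y z" by (rule xor_dist_triangle)
next
  fix g h k :: nat
  show "xor_dist (g \<otimes>\<^bsub>xor_group\<^esub> h) (g \<otimes>\<^bsub>xor_group\<^esub> k) = xor_dist h k"
  proof -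
    have "(g XOR h) XOR (g XOR k) = h XOR k"
      by (metis xor.assoc xor.commute xor.left_neutral xor_self_eq)
    then show ?thesis by (simp add: xor_dist_def)
  qed
next
  fix R :: real
  have "{g \<in> carrier xor_group. xor_dist \<one>\<^bsub>xor_group\<^esub> g \<le> R}
        \<subseteq> {g. set_decode g \<subseteq> {e. block_of e \<le> nat \<lceil>R\<rceil>}}"
  proof (clarsimp)
    fix g e assume "xor_dist 0 g \<le> R" "e \<in> set_decode g"
    then have "real (block_of e) + 1 \<le> R"
      using block_norm_ge_member[of "set_decode g" e block_of] by (simp add: xor_dist_def)
    then show "block_of e \<le> nat \<lceil>R\<rceil>" by linarith
  qed
  then show "finite {g \<in> carrier xor_group. xor_dist \<one>\<^bsub>xor_group\<^esub> g \<le> R}"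
    using finite_bounded_support[OF finite_block_of_le] by (rule finite_subset)
qed

section \<open>Quasi-ultrametric spaces have ultrametric asymptotic cones\<close>

text \<open>Along a nonprincipal ultrafilter every bounded real sequence converges (its limit is
  the supremum of the eventual lower bounds).\<close>

lemma ultrafilter_limit_exists:
  fixes f :: "nat \<Rightarrow> real"
  assumes U: "nonprincipal_ultrafilter F" and bounded: "eventually (\<lambda>n. 0 \<le> f n \<and> f n \<le> B) F"
  shows "\<exists>L. (f \<longlongrightarrow> L) F"
proof -
  have F_proper: "F \<noteq> bot" and ultra: "\<And>P. eventually P F \<or> eventually (\<lambda>n. \<not> P n) F"
    using U by (auto simp: nonprincipal_ultrafilter_def)
  define S where "S = {t. eventually (\<lambda>n. t \<le> f n) F}"
  have "0 \<in> S" using bounded unfolding S_def by (auto elim: eventually_mono)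
  have S_le_B: "t \<le> B" if "t \<in> S" for t
  proof (rule ccontr)
    assume "\<not> t \<le> B"
    have "eventually (\<lambda>n. t \<le> f n \<and> 0 \<le> f n \<and> f n \<le> B) F"
      using that bounded unfolding S_def by (auto intro: eventually_conj)
    then have "eventually (\<lambda>n. False) F" using \<open>\<not> t \<le> B\<close> by (auto elim: eventually_mono)
    then show False using F_proper by simp
  qed
  then have bdd: "bdd_above S" by (intro bdd_aboveI)
  have "(f \<longlongrightarrow> Sup S) F"
  proof (rule order_tendstoI)
    fix y assume "y < Sup S"
    then obtain t where "t \<in> S" "y < t" using less_cSup_iff[OF _ bdd] \<open>0 \<in> S\<close> by blast
    then show "eventually (\<lambda>n. y < f n) F" unfolding S_def by (auto elim: eventually_mono)
  next
    fix y assume "Sup S < y"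
    then have "(Sup S + y) / 2 \<notin> S" using cSup_upper[OF _ bdd] by fastforce
    then have "eventually (\<lambda>n. \<not> (Sup S + y) / 2 \<le> f n) F"
      using ultra[of "\<lambda>n. (Sup S + y) / 2 \<le> f n"] by (auto simp: S_def)
    then show "eventually (\<lambda>n. f n < y) F" using \<open>Sup S < y\<close> by (auto elim: eventually_mono)
  qed
  then show ?thesis by blast
qed

lemma cone_dist_exists:
  assumes X: "metric_on X d" and U: "nonprincipal_ultrafilter F" and r: "\<And>n. 0 < r n"
    and c: "\<And>n. c n \<in> X" and x: "cone_seq X d F c r x" and y: "cone_seq X d F c r y"
  shows "((\<lambda>n. d (x n) (y n) / r n) \<longlongrightarrow> cone_dist d F r x y) F"
proof -
  obtain Mx My where Mx: "eventually (\<lambda>n. d (x n) (c n) / r n \<le> Mx) F"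
    and My: "eventually (\<lambda>n. d (y n) (c n) / r n \<le> My) F"
    using x y unfolding cone_seq_def by blast
  have bounded: "eventually (\<lambda>n. 0 \<le> d (x n) (y n) / r n \<and> d (x n) (y n) / r n \<le> Mx + My) F"
    using eventually_conj[OF Mx My]
  proof (rule eventually_mono)
    fix n assume bound: "d (x n) (c n) / r n \<le> Mx \<and> d (y n) (c n) / r n \<le> My"
    have "x n \<in> X" "y n \<in> X" using x y by (simp_all add: cone_seq_def)
    then have "0 \<le> d (x n) (y n)" "d (x n) (y n) \<le> d (x n) (c n) + d (y n) (c n)"
      using X c[of n] unfolding metric_on_def by metis+
    moreover have "d (x n) (y n) / r n \<le> d (x n) (c n) / r n + d (y n) (c n) / r n"
      using calculation r[of n] by (simp add: add_divide_distrib[symmetric] divide_right_mono)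
    ultimately show "0 \<le> d (x n) (y n) / r n \<and> d (x n) (y n) / r n \<le> Mx + My"
      using bound r[of n] by simp
  qed
  obtain L where L: "((\<lambda>n. d (x n) (y n) / r n) \<longlongrightarrow> L) F"
    using ultrafilter_limit_exists[OF U bounded] by blast
  moreover have "F \<noteq> bot" using U by (simp add: nonprincipal_ultrafilter_def)
  ultimately show ?thesis unfolding cone_dist_def using tendsto_Lim by metis
qed

text \<open>If \<open>d x y \<le> max (d x z) (d y z) + k\<close> for a constant \<open>k\<close>, then rescaling by \<open>r n \<rightarrow> \<infinity>\<close>
  kills the constant and every asymptotic cone is ultrametric.\<close>

lemma all_cones_ultrametric_if_quasi_ultrametric:
  assumes X: "metric_on X d"
    and quasi: "\<And>x y z. x \<in> X \<Longrightarrow> y \<in> X \<Longrightarrow> z \<in> X \<Longrightarrow> d x y \<le> max (d x z) (d y z) + k"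
  shows "all_cones_ultrametric X d"
  unfolding all_cones_ultrametric_def cone_ultrametric_def
proof (intro allI impI)
  fix F and c :: "nat \<Rightarrow> _" and r :: "nat \<Rightarrow> real" and x y z
  assume "nonprincipal_ultrafilter F \<and> (\<forall>n. c n \<in> X) \<and> (\<forall>n. 0 < r n) \<and> filterlim r at_top F"
  then have U: "nonprincipal_ultrafilter F" and c: "\<And>n. c n \<in> X" and r: "\<And>n. 0 < r n"
    and r_lim: "filterlim r at_top F" by auto
  assume "cone_seq X d F c r x \<and> cone_seq X d F c r y \<and> cone_seq X d F c r z"
  then have seqs: "cone_seq X d F c r x" "cone_seq X d F c r y" "cone_seq X d F c r z" by auto
  note lim = cone_dist_exists[OF X U r, where c = c, OF c]
  have "((\<lambda>n. k / r n) \<longlongrightarrow> 0) F"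
    by (rule tendsto_divide_0[OF tendsto_const filterlim_at_top_imp_at_infinity[OF r_lim]])
  then have upper: "((\<lambda>n. max (d (x n) (z n) / r n) (d (y n) (z n) / r n) + k / r n)
      \<longlongrightarrow> max (cone_dist d F r x z) (cone_dist d F r y z) + 0) F"
    by (intro tendsto_add tendsto_max lim seqs)
  have "d (x n) (y n) / r n \<le> max (d (x n) (z n) / r n) (d (y n) (z n) / r n) + k / r n" for n
  proof -
    have "x n \<in> X" "y n \<in> X" "z n \<in> X" using seqs by (simp_all add: cone_seq_def)
    then have "d (x n) (y n) / r n \<le> (max (d (x n) (z n)) (d (y n) (z n)) + k) / r n"
      using quasi r[of n] by (simp add: divide_right_mono)
    also have "\<dots> = max (d (x n) (z n) / r n) (d (y n) (z n) / r n) + k / r n"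
      using r[of n] by (simp add: add_divide_distrib max_divide_distrib_right)
    finally show ?thesis .
  qed
  moreover have "F \<noteq> bot" using U by (simp add: nonprincipal_ultrafilter_def)
  ultimately show "cone_dist d F r x y \<le> max (cone_dist d F r x z) (cone_dist d F r y z)"
    using tendsto_le[OF _ upper lim[OF seqs(1,2)]] by simp
qed

section \<open>A Lebesgue covering obstruction on grids\<close>

lemma s_chain_refl: "a \<in> U \<Longrightarrow> s_chain d s U a a"
  unfolding s_chain_def by (intro exI[of _ "[a]"]) auto

lemma s_chain_extend_left:
  assumes "s_chain d s U a b" "z \<in> U" "d z a < s"
  shows "s_chain d s U z b"
proof -
  obtain xs where xs: "xs \<noteq> []" "hd xs = a" "last xs = b" "set xs \<subseteq> U"
    "\<forall>i. Suc i < length xs \<longrightarrow> d (xs ! i) (xs ! Suc i) < s"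
    using assms(1) unfolding s_chain_def by blast
  show ?thesis unfolding s_chain_def
  proof (intro exI[of _ "z # xs"] conjI allI impI)
    fix i assume "Suc i < length (z # xs)"
    then show "d ((z # xs) ! i) ((z # xs) ! Suc i) < s"
      using xs assms(3) by (cases i) (auto simp: hd_conv_nth)
  qed (use xs assms(2) in auto)
qed

lemma s_chain_last_in: "s_chain d s U a b \<Longrightarrow> b \<in> U"
  unfolding s_chain_def by (metis last_in_set subsetD)

text \<open>Kuhn's combinatorial lemma (the discrete Sperner lemma behind Brouwer's fixed point
  theorem): a labelling of the grid \<open>{0..p}\<^sup>n\<close> respecting opposite faces has a Kuhn simplex
  whose \<open>n + 1\<close> vertices carry pairwise distinct reduced labels.\<close>

lemma kuhn_rainbow_simplex:
  assumes "0 < p"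
    and "\<And>x j. \<forall>i. x i \<le> p \<Longrightarrow> j < n \<Longrightarrow> x j = 0 \<Longrightarrow> lab x j = 0"
    and "\<And>x j. \<forall>i. x i \<le> p \<Longrightarrow> j < n \<Longrightarrow> x j = p \<Longrightarrow> lab x j = 1"
  obtains base upd S where "kuhn_simplex p n base upd S" "card S = Suc n"
    "inj_on (reduced n \<circ> lab) S"
proof -
  have "odd (card {S. ksimplex p n S \<and> (reduced n \<circ> lab) ` S = {..n}})"
    using assms by (intro kuhn_combinatorial) auto
  then have "{S. ksimplex p n S \<and> (reduced n \<circ> lab) ` S = {..n}} \<noteq> {}"
    by (rule odd_card_imp_not_empty)
  then obtain S where S: "ksimplex p n S" "(reduced n \<circ> lab) ` S = {..n}" by blast
  have card: "card S = Suc n" using S(1) by (rule ksimplex_card)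
  then have "finite S" by (simp add: card_ge_0_finite)
  then have "inj_on (reduced n \<circ> lab) S"
    by (rule eq_card_imp_inj_on) (simp only: S(2) card card_atMost)
  moreover obtain base upd where "kuhn_simplex p n base upd S" using S(1) by (auto elim: ksimplex.cases)
  ultimately show ?thesis using that card by blast
qed

lemma kuhn_simplex_vertices_close:
  assumes "kuhn_simplex p n base upd S" "a \<in> S" "b \<in> S"
  shows "a i \<le> p" "a i \<le> b i + 1"
  using kuhn_simplex.s_le_p[OF assms(1,2)] kuhn_simplex.le_Suc_base[OF assms(1,2), of i]
    kuhn_simplex.base_le[OF assms(1,3), of i] by simp_all

lemma pigeonhole_colours:
  assumes "card S = Suc n" "m < n" "\<And>x. col x \<le> (m::nat)"
  obtains u v where "u \<in> S" "v \<in> S" "u \<noteq> v" "col u = col v"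
proof -
  have "\<not> inj_on col S"
  proof
    assume "inj_on col S"
    then have "card S \<le> card {..m}" using assms(3) by (intro card_inj_on_le) auto
    then show False using assms(1,2) by simp
  qed
  then show ?thesis using that unfolding inj_on_def by blast
qed

text \<open>This is
  impossible: label a point \<open>x\<close> in direction \<open>j\<close> by whether its colour class reaches the face
  \<open>x j = p\<close> by an \<open>s\<close>-chain.  A rainbow Kuhn simplex has \<open>n + 1\<close> vertices, so two of them
  share a colour; being neighbours, they reach the same faces and get equal labels.\<close>

lemma grid_cover_obstruction:
  fixes Phi :: "(nat \<Rightarrow> nat) \<Rightarrow> 'a" and U :: "nat \<Rightarrow> 'a set" and d :: "'a \<Rightarrow> 'a \<Rightarrow> real"
  assumes p: "0 < p" and m: "m < n"
    and cover: "\<And>x. \<exists>i\<le>m. Phi x \<in> U i"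
    and near: "\<And>a b. (\<And>i. a i \<le> p) \<Longrightarrow> (\<And>i. b i \<le> p) \<Longrightarrow> (\<And>i. a i \<le> b i + 1) \<Longrightarrow>
                 (\<And>i. b i \<le> a i + 1) \<Longrightarrow> d (Phi a) (Phi b) < s"
    and far: "\<And>x y j. j < n \<Longrightarrow> x j = 0 \<Longrightarrow> y j = p \<Longrightarrow> D \<le> d (Phi x) (Phi y)"
    and small: "\<And>i x y. i \<le> m \<Longrightarrow> x \<in> U i \<Longrightarrow> y \<in> U i \<Longrightarrow> s_chain d s (U i) x y \<Longrightarrow> d x y < D"
  shows False
proof -
  obtain col where col: "\<And>x. col x \<le> m \<and> Phi x \<in> U (col x)" using cover by metis
  define reaches where "reaches x j \<longleftrightarrow>
      (\<exists>y. (\<forall>i. y i \<le> p) \<and> y j = p \<and> s_chain d s (U (col x)) (Phi x) (Phi y))" for x j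
  define lab :: "(nat \<Rightarrow> nat) \<Rightarrow> nat \<Rightarrow> nat" where "lab x j = (if reaches x j then 1 else 0)" for x j
  have lab0: "lab x j = 0" if "j < n" "x j = 0" for x j
  proof -
    have "\<not> reaches x j"
    proof
      assume "reaches x j"
      then obtain y where "y j = p" and chain: "s_chain d s (U (col x)) (Phi x) (Phi y)"
        unfolding reaches_def by blast
      have "d (Phi x) (Phi y) < D" using small[OF _ _ _ chain] col[of x] s_chain_last_in[OF chain] by blast
      moreover have "D \<le> d (Phi x) (Phi y)" using far[of j x y] that \<open>y j = p\<close> by blast
      ultimately show False by simp
    qed
    then show ?thesis by (simp add: lab_def)
  qed
  have lab1: "lab x j = 1" if "\<forall>i. x i \<le> p" "x j = p" for x j
    using that col[of x] unfolding lab_def reaches_def by (auto intro: s_chain_refl)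
  obtain base upd S where S: "kuhn_simplex p n base upd S" "card S = Suc n"
    and rainbow: "inj_on (reduced n \<circ> lab) S"
    using kuhn_rainbow_simplex[of p n lab] p lab0 lab1 by blast
  obtain u v where uv: "u \<in> S" "v \<in> S" "u \<noteq> v" "col u = col v"
    using pigeonhole_colours[OF S(2) m] col by blast
  have close: "d (Phi a) (Phi b) < s" if "a \<in> S" "b \<in> S" for a b
    using near kuhn_simplex_vertices_close[OF S(1)] that by blast
  have transfer: "reaches b j" if "reaches a j" "a \<in> S" "b \<in> S" "col a = col b" for a b j
  proof -
    obtain y where y: "\<forall>i. y i \<le> p" "y j = p" and chain: "s_chain d s (U (col a)) (Phi a) (Phi y)"
      using \<open>reaches a j\<close> unfolding reaches_def by blast
    have "s_chain d s (U (col b)) (Phi b) (Phi y)"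
      using s_chain_extend_left[OF chain] col[of b] close[of b a] that by simp
    then show ?thesis using y unfolding reaches_def by blast
  qed
  have "lab u = lab v"
    using transfer[of u _ v] transfer[of v _ u] uv unfolding lab_def by fastforce
  then show False using rainbow uv unfolding inj_on_def by auto
qed

section \<open>Embedding large grids into the group\<close>

definition grid_set :: "nat \<Rightarrow> (nat \<Rightarrow> nat) \<Rightarrow> nat set" where
  "grid_set J x = (\<Union>i\<le>J. cell J i ` {..<x i})"

definition grid_point :: "nat \<Rightarrow> (nat \<Rightarrow> nat) \<Rightarrow> nat" where
  "grid_point J x = set_encode (grid_set J x)"

lemma cell_in_grid_set: "cell J i t \<in> grid_set J x \<longleftrightarrow> i \<le> J \<and> t < x i"
  by (auto simp: grid_set_def cell_inject)

lemma set_decode_grid_point_xor: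
  "set_decode (grid_point J x XOR grid_point J y) = sym_diff (grid_set J x) (grid_set J y)"
  by (simp add: grid_point_def set_decode_xor grid_set_def)

lemma grid_set_diff:
  assumes "\<And>i. x i \<le> y i + 1" "e \<in> grid_set J x - grid_set J y"
  shows "\<exists>i\<le>J. y i < x i \<and> e = cell J i (y i)"
proof -
  obtain i t where e: "e = cell J i t" "i \<le> J" "t < x i" using assms(2) by (auto simp: grid_set_def)
  then have "\<not> t < y i" using assms(2) cell_in_grid_set by blast
  then have "t = y i" using e(3) assms(1)[of i] by linarith
  then show ?thesis using e by blast
qed

text \<open>Neighbouring grid points are at distance \<open>< 2J + 3\<close>: their difference consists of at
  most \<open>J + 1\<close> cells of block \<open>J\<close>.\<close>

lemma grid_near:
  assumes "\<And>i. x i \<le> block_size J" "\<And>i. y i \<le> block_size J"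
    and "\<And>i. x i \<le> y i + 1" "\<And>i. y i \<le> x i + 1"
  shows "xor_dist (grid_point J x) (grid_point J y) < real (2*J + 3)"
proof -
  define C where "C = set_decode (grid_point J x XOR grid_point J y)"
  have diff: "\<exists>i\<le>J. min (x i) (y i) < block_size J \<and> e = cell J i (min (x i) (y i))"
    if "e \<in> C" for e
  proof -
    from that consider "e \<in> grid_set J x - grid_set J y" | "e \<in> grid_set J y - grid_set J x"
      by (auto simp: C_def set_decode_grid_point_xor)
    then show ?thesis
    proof cases
      case 1
      then obtain i where "i \<le> J" "y i < x i" "e = cell J i (y i)"
        using grid_set_diff[of x y e J] assms(3) by blast
      then show ?thesis using assms(1)[of i] by (intro exI[of _ i]) (auto simp: min_def)
    next
      case 2
      then obtain i where "i \<le> J" "x i < y i" "e = cell J i (x i)"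
        using grid_set_diff[of y x e J] assms(4) by blast
      then show ?thesis using assms(2)[of i] by (intro exI[of _ i]) (auto simp: min_def)
    qed
  qed
  then have "C \<subseteq> (\<lambda>i. cell J i (min (x i) (y i))) ` {..J}" by blast
  then have "card C \<le> card ((\<lambda>i. cell J i (min (x i) (y i))) ` {..J})" by (rule card_mono[rotated]) simp
  also have "\<dots> \<le> Suc J" using card_image_le[of "{..J}"] by simp
  finally have card_C: "card C \<le> Suc J" .
  have block_C: "block_of e = J" if "e \<in> C" for e using diff[OF that] block_of_cell by auto
  have "block_norm block_of C \<le> count_weight J (Suc J)"
  proof (rule block_norm_le)
    show "block_weight block_of C J' \<le> count_weight J (Suc J)" for J'
    proof (cases "J' = J")
      case True
      have "{e \<in> C. block_of e = J'} = C" using block_C True by auto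
      then have "card {e \<in> C. block_of e = J'} \<le> Suc J" using card_C by simp
      then show ?thesis unfolding block_weight_def True by (rule count_weight_mono)
    next
      case False
      then have "block_weight block_of C J' = 0" using block_C by (auto intro: block_weight_outside)
      then show ?thesis by (simp add: count_weight_nonneg)
    qed
  qed (simp_all add: C_def count_weight_nonneg)
  also have "\<dots> < real (2*J + 3)"
    using ln_less_self[of "2 + real J"] by (simp add: count_weight_def)
  finally show ?thesis by (simp add: xor_dist_def C_def)
qed

text \<open>Points on opposite faces \<open>x j = 0\<close>, \<open>y j = block_size J\<close> differ in a full row of block \<open>J\<close>,
  so their distance is at least \<open>ln (1 + block_size J)\<close>.\<close>

lemma grid_far:
  assumes "j \<le> J" "x j = 0" "y j = block_size J"
  shows "ln (1 + real (block_size J)) \<le> xor_dist (grid_point J x) (grid_point J y)"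
proof -
  define C where "C = set_decode (grid_point J x XOR grid_point J y)"
  have "cell J j ` {..<block_size J} \<subseteq> {e \<in> C. block_of e = J}"
    using assms by (auto simp: C_def set_decode_grid_point_xor cell_in_grid_set block_of_cell)
  then have "card (cell J j ` {..<block_size J}) \<le> card {e \<in> C. block_of e = J}"
    by (intro card_mono) (simp_all add: C_def)
  moreover have "inj_on (cell J j) {..<block_size J}" by (simp add: inj_on_def cell_inject)
  ultimately have "block_size J \<le> card {e \<in> C. block_of e = J}" by (simp add: card_image)
  then have "count_weight J (block_size J) \<le> block_weight block_of C J"
    unfolding block_weight_def by (rule count_weight_mono)
  also have "\<dots> \<le> xor_dist (grid_point J x) (grid_point J y)"
    unfolding xor_dist_def C_def by (rule block_weight_le_norm) simp
  finally show ?thesis using block_size_pos[of J] by (simp add: count_weight_def)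
qed

text \<open>Given a cover witnessing \<open>asdim\<^sub>A\<^sub>N \<le> m\<close> with constants \<open>C, k\<close>, choose \<open>J \<ge> m, C, k\<close> and
  the scale \<open>s = 2J + 3\<close>; then \<open>C s + k < ln (1 + block_size J)\<close> and the grid of block \<open>J\<close>
  contradicts the covering obstruction.\<close>

lemma asdim_AN_infinite_xor_dist: "asdim_AN_infinite UNIV xor_dist"
  unfolding asdim_AN_infinite_def
proof
  assume "\<exists>m. asdim_AN_le UNIV xor_dist m"
  then obtain m C k where covers: "\<And>s. s > 0 \<Longrightarrow> \<exists>U :: nat \<Rightarrow> nat set.
      (\<forall>i\<le>m. U i \<subseteq> UNIV) \<and> (\<Union>i\<le>m. U i) = UNIV \<and>
      (\<forall>i\<le>m. \<forall>x\<in>U i. \<forall>y\<in>U i. s_chain xor_dist s (U i) x y \<longrightarrow> xor_dist x y \<le> C * s + k)"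
    unfolding asdim_AN_le_def by blast
  define J where "J = m + nat \<lceil>C\<rceil> + nat \<lceil>k\<rceil>"
  define s where "s = real (2*J + 3)"
  obtain U :: "nat \<Rightarrow> nat set" where cover: "(\<Union>i\<le>m. U i) = UNIV"
    and components: "\<And>i x y. i \<le> m \<Longrightarrow> x \<in> U i \<Longrightarrow> y \<in> U i \<Longrightarrow> s_chain xor_dist s (U i) x y
                       \<Longrightarrow> xor_dist x y \<le> C * s + k"
    using covers[of s] by (auto simp: s_def)
  have "C \<le> real J" "k \<le> real J" unfolding J_def by linarith+
  then have "C * s + k \<le> real J * s + real J"
    by (intro add_mono mult_right_mono) (simp_all add: s_def)
  also have "\<dots> < real (2*J*J + 4*J + 1)" by (simp add: s_def algebra_simps)
  also have "\<dots> \<le> ln (1 + real (block_size J))" by (rule ln_block_size)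
  finally have scale: "C * s + k < ln (1 + real (block_size J))" .
  show False
  proof (rule grid_cover_obstruction[where Phi = "grid_point J" and U = U and n = "Suc J"])
    show "0 < block_size J" by (rule block_size_pos)
    show "m < Suc J" by (simp add: J_def)
    show "\<exists>i\<le>m. grid_point J x \<in> U i" for x using cover by blast
    show "xor_dist (grid_point J a) (grid_point J b) < s"
      if "\<And>i. a i \<le> block_size J" "\<And>i. b i \<le> block_size J"
        "\<And>i. a i \<le> b i + 1" "\<And>i. b i \<le> a i + 1" for a b
      using grid_near that unfolding s_def by blast
    show "ln (1 + real (block_size J)) \<le> xor_dist (grid_point J x) (grid_point J y)"
      if "j < Suc J" "x j = 0" "y j = block_size J" for x y j
      using grid_far[of j J x y] that by simp
    show "xor_dist x y < ln (1 + real (block_size J))"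
      if "i \<le> m" "x \<in> U i" "y \<in> U i" "s_chain xor_dist s (U i) x y" for i x y
      using components[OF that] scale by linarith
  qed
qed

theorem corollary3p9:
  shows "\<exists>(K :: nat monoid) d. locally_finite_group K \<and> proper_left_invariant_metric K d \<and>
           asdim_AN_infinite (carrier K) d \<and> all_cones_ultrametric (carrier K) d"
proof (intro exI conjI)
  show "locally_finite_group xor_group" by (rule locally_finite_xor_group)
  show "proper_left_invariant_metric xor_group xor_dist" by (rule proper_left_invariant_xor_dist)
  show "asdim_AN_infinite (carrier xor_group) xor_dist"
    using asdim_AN_infinite_xor_dist by simp
  have "metric_on UNIV xor_dist"
    using proper_left_invariant_xor_dist by (simp add: proper_left_invariant_metric_def)
  then have "all_cones_ultrametric UNIV xor_dist"
    using xor_dist_quasi_ultrametric by (rule all_cones_ultrametric_if_quasi_ultrametric)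
  then show "all_cones_ultrametric (carrier xor_group) xor_dist" by simp
qed

end
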